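(* Let $G$ be a topological rough group and $X$ a rough $G$-space with (left, resp. right) rough action $\mu$. Then for every $g\in G$, the left (resp. right) transformation map $L_g:\overline{X}\to\overline{X}$, $L_g(x)=gx$ (resp. $R_g:\overline{X}\to\overline{X}$, $R_g(x)=xg$) is a homeomorphism of $\overline{X}$.
   Context: An approximation space is a pair $(U,R)$ with $U$ a set and $R$ an equivalence relation on $U$; for $X\subseteq U$, $\overline{X}=\bigcup\{[x]_R : [x]_R\cap X\neq\emptyset\}$. Let $U$ carry a binary operation written $xy$. A subset $G\subseteq U$ is a rough group if: (1) $xy\in\overline{G}$ for all $x,y\in G$; (2) $(xy)z=x(yz)$ for all $x,y,z\in\overline{G}$; (3) there is $e\in\overline{G}$ with $xe=ex=x$ for all $x\in G$; (4) for every $x\in G$ there is $y\in G$ with $xy=yx=e$ (written $x^{-1}$). A topological rough group is a rough group $G$ with a topology $\tau$ on $\overline{G}$, $\tau_G$ the subspace topology on $G$, such that $G\times G\to\overline{G}$, $(x,y)\mapsto xy$, is continuous (product of $\tau_G$ to $\tau$) and $G\to G$, $x\mapsto x^{-1}$, is continuous for $\tau_G$. Let $X\subseteq U$ with $\overline{X}$ carrying a topology (and $X$ the subspace topology). A left rough action of $G$ on $X$ is a continuous map $\mu:\overline{G}\times\overline{X}\to\overline{X}$, written $\mu(g,x)=gx$, such that $g(g'x)=(gg')x$ for all $g,g'\in\overline{G}$, $x\in\overline{X}$, and $ex=x$ for all $x\in\overline{X}$, where $e$ is the rough identity. A right rough action is a continuous map $\overline{X}\times\overline{G}\to\overline{X}$,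 $(x,g)\mapsto xg$, with $(xg)g'=x(gg')$ and $xe=x$. $X$ with such an action is called a rough $G$-space. *)

theory Defs
  imports "HOL-Analysis.Analysis"
begin

definition approx_space_op :: "'a set \<Rightarrow> ('a \<times> 'a) set \<Rightarrow> ('a \<Rightarrow> 'a \<Rightarrow> 'a) \<Rightarrow> bool" where
  "approx_space_op U R bop \<longleftrightarrow> equiv U R \<and> (\<forall>x\<in>U. \<forall>y\<in>U. bop x y \<in> U)"

definition upper_approx :: "'a set \<Rightarrow> ('a \<times> 'a) set \<Rightarrow> 'a set \<Rightarrow> 'a set" where
  "upper_approx U R X = \<Union>{R `` {x} | x. x \<in> U \<and> R `` {x} \<inter> X \<noteq> {}}"

definition rough_group :: "'a set \<Rightarrow> ('a \<times> 'a) set \<Rightarrow> ('a \<Rightarrow> 'a \<Rightarrow> 'a) \<Rightarrow> 'a set \<Rightarrow> 'a \<Rightarrow> bool" where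
  "rough_group U R bop G e \<longleftrightarrow>
     approx_space_op U R bop \<and> G \<subseteq> U \<and>
     (\<forall>x\<in>G. \<forall>y\<in>G. bop x y \<in> upper_approx U R G) \<and>
     (\<forall>x\<in>upper_approx U R G. \<forall>y\<in>upper_approx U R G. \<forall>z\<in>upper_approx U R G.
         bop (bop x y) z = bop x (bop y z)) \<and>
     e \<in> upper_approx U R G \<and> (\<forall>x\<in>G. bop x e = x \<and> bop e x = x) \<and>
     (\<forall>x\<in>G. \<exists>y\<in>G. bop x y = e \<and> bop y x = e)"

text \<open>The rough inverse x^{-1} (unique in a rough group).\<close>
definition rough_inv :: "('a \<Rightarrow> 'a \<Rightarrow> 'a) \<Rightarrow> 'a set \<Rightarrow> 'a \<Rightarrow> 'a \<Rightarrow> 'a" where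
  "rough_inv bop G e x = (THE y. y \<in> G \<and> bop x y = e \<and> bop y x = e)"

definition topological_rough_group ::
  "'a set \<Rightarrow> ('a \<times> 'a) set \<Rightarrow> ('a \<Rightarrow> 'a \<Rightarrow> 'a) \<Rightarrow> 'a set \<Rightarrow> 'a \<Rightarrow> 'a topology \<Rightarrow> bool" where
  "topological_rough_group U R bop G e T \<longleftrightarrow>
     rough_group U R bop G e \<and> topspace T = upper_approx U R G \<and>
     continuous_map (prod_topology (subtopology T G) (subtopology T G)) T (\<lambda>(x, y). bop x y) \<and>
     continuous_map (subtopology T G) (subtopology T G) (rough_inv bop G e)"

definition rough_left_action ::
  "'a set \<Rightarrow> ('a \<times> 'a) set \<Rightarrow> ('a \<Rightarrow> 'a \<Rightarrow> 'a) \<Rightarrow> 'a set \<Rightarrow> 'a \<Rightarrow> 'a topology \<Rightarrow>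
   'a set \<Rightarrow> 'a topology \<Rightarrow> ('a \<Rightarrow> 'a \<Rightarrow> 'a) \<Rightarrow> bool" where
  "rough_left_action U R bop G e TG X TX act \<longleftrightarrow>
     continuous_map (prod_topology TG TX) TX (\<lambda>(g, x). act g x) \<and>
     (\<forall>g\<in>upper_approx U R G. \<forall>g'\<in>upper_approx U R G. \<forall>x\<in>upper_approx U R X.
        act g (act g' x) = act (bop g g') x) \<and>
     (\<forall>x\<in>upper_approx U R X. act e x = x)"

definition rough_right_action ::
  "'a set \<Rightarrow> ('a \<times> 'a) set \<Rightarrow> ('a \<Rightarrow> 'a \<Rightarrow> 'a) \<Rightarrow> 'a set \<Rightarrow> 'a \<Rightarrow> 'a topology \<Rightarrow>
   'a set \<Rightarrow> 'a topology \<Rightarrow> ('a \<Rightarrow> 'a \<Rightarrow> 'a) \<Rightarrow> bool" where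
  "rough_right_action U R bop G e TG X TX act \<longleftrightarrow>
     continuous_map (prod_topology TX TG) TX (\<lambda>(x, g). act x g) \<and>
     (\<forall>g\<in>upper_approx U R G. \<forall>g'\<in>upper_approx U R G. \<forall>x\<in>upper_approx U R X.
        act (act x g) g' = act x (bop g g')) \<and>
     (\<forall>x\<in>upper_approx U R X. act x e = x)"

end

theory Submission
  imports Defs
begin

text \<open>Translation by \<open>g\<close> is continuous as a slice of the jointly continuous action, and
  translation by the rough inverse of \<open>g\<close> is a two-sided inverse by the action axioms; both
  apply because \<open>G\<close> lies inside its upper approximation. A right action is a left action of
  the opposite multiplication, so the right case reduces to the left one.\<close>

lemma subset_upper_approx:
  assumes "refl_on U R" "G \<subseteq> U"
  shows "G \<subseteq> upper_approx U R G"
proof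
  fix g assume g: "g \<in> G"
  then have "(g, g) \<in> R" using assms by (meson refl_onD subsetD)
  then show "g \<in> upper_approx U R G" unfolding upper_approx_def using g assms by blast
qed

lemma continuous_map_slice:
  assumes "continuous_map (prod_topology X Y) Z f" "a \<in> topspace X"
  shows "continuous_map Y Z (\<lambda>y. f (a, y))"
proof -
  have "continuous_map Y (prod_topology X Y) (\<lambda>y. (a, y))"
    using assms(2) by (simp add: continuous_map_paired)
  from continuous_map_compose[OF this assms(1)] show ?thesis by (simp add: o_def)
qed

lemma rough_right_action_eq_left_action_opposite:
  "rough_right_action U R bop G e TG X TX act \<longleftrightarrow>
   rough_left_action U R (\<lambda>a b. bop b a) G e TG X TX (\<lambda>g x. act x g)"
proof -
  have "continuous_map (prod_topology TX TG) TX (\<lambda>(x, g). act x g) \<longleftrightarrow>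
        continuous_map (prod_topology TG TX) TX (\<lambda>(g, x). act x g)"
    using continuous_map_compose[OF homeomorphic_imp_continuous_map[OF homeomorphic_map_swap]]
    by (fastforce simp: o_def case_prod_unfold)
  then show ?thesis
    unfolding rough_right_action_def rough_left_action_def by blast
qed

lemma rough_left_action_homeomorphic_map:
  assumes act: "rough_left_action U R bop G e TG X TX act"
    and TG: "topspace TG = upper_approx U R G" and TX: "topspace TX = upper_approx U R X"
    and g: "g \<in> upper_approx U R G" and h: "h \<in> upper_approx U R G"
    and gh: "bop g h = e" and hg: "bop h g = e"
  shows "homeomorphic_map TX TX (act g)"
proof -
  have cont: "continuous_map (prod_topology TG TX) TX (\<lambda>(g, x). act g x)"
    and comp: "\<forall>g\<in>upper_approx U R G. \<forall>g'\<in>upper_approx U R G. \<forall>x\<in>upper_approx U R X.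
                 act g (act g' x) = act (bop g g') x"
    and unit: "\<forall>x\<in>upper_approx U R X. act e x = x"
    using act unfolding rough_left_action_def by auto
  have "continuous_map TX TX (act k)" if "k \<in> upper_approx U R G" for k
    using continuous_map_slice[OF cont, of k] that TG by simp
  moreover have "\<forall>x\<in>topspace TX. act h (act g x) = x" "\<forall>x\<in>topspace TX. act g (act h x) = x"
    using comp unit g h gh hg TX by metis+
  ultimately have "homeomorphic_maps TX TX (act g) (act h)"
    unfolding homeomorphic_maps_def using g h by blast
  then show ?thesis
    using homeomorphic_map_maps by blast
qed

theorem mainTheorem5:
  fixes U :: "'a set" and R :: "('a \<times> 'a) set" and bop :: "'a \<Rightarrow> 'a \<Rightarrow> 'a"
    and G X :: "'a set" and e :: 'a and TG TX :: "'a topology"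
    and actl actr :: "'a \<Rightarrow> 'a \<Rightarrow> 'a"
  assumes "topological_rough_group U R bop G e TG"
    and "X \<subseteq> U"
    and "topspace TX = upper_approx U R X"
  shows "(rough_left_action U R bop G e TG X TX actl \<longrightarrow>
            (\<forall>g\<in>G. homeomorphic_map TX TX (\<lambda>x. actl g x)))
       \<and> (rough_right_action U R bop G e TG X TX actr \<longrightarrow>
            (\<forall>g\<in>G. homeomorphic_map TX TX (\<lambda>x. actr x g)))"
proof -
  have TG: "topspace TG = upper_approx U R G" and rg: "rough_group U R bop G e"
    using assms(1) unfolding topological_rough_group_def by auto
  then have G_upper: "G \<subseteq> upper_approx U R G"
    using subset_upper_approx unfolding rough_group_def approx_space_op_def equiv_def by blast
  have inverse: "\<exists>h\<in>upper_approx U R G. bop g h = e \<and> bop h g = e" if "g \<in> G" for g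
    using rg that G_upper unfolding rough_group_def by blast
  show ?thesis
  proof (intro conjI impI ballI)
    fix g assume "rough_left_action U R bop G e TG X TX actl" "g \<in> G"
    then show "homeomorphic_map TX TX (\<lambda>x. actl g x)"
      using inverse G_upper rough_left_action_homeomorphic_map[OF _ TG assms(3)] by blast
  next
    fix g assume "rough_right_action U R bop G e TG X TX actr" "g \<in> G"
    then show "homeomorphic_map TX TX (\<lambda>x. actr x g)"
      using inverse G_upper rough_left_action_homeomorphic_map[OF _ TG assms(3)]
      unfolding rough_right_action_eq_left_action_opposite by blast
  qed
qed

end
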